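(* Let $X$ be a Tychonoff space and $x \in X$. If player II has a winning strategy in the game $\mathsf{G}_1(\pi\mathcal{N}_x, \pi\mathcal{N}_x)$, then $X$ is supertight at $x$.
   Context: A family $\mathcal{S}$ of nonempty subsets of $X$ is a $\pi$-network at $x$ if every neighborhood of $x$ contains an element of $\mathcal{S}$. $\pi\mathcal{N}_x$ denotes the collection of all $\pi$-networks at $x$ consisting of finite sets. The game $\mathsf{G}_1(\pi\mathcal{N}_x,\pi\mathcal{N}_x)$: in each inning $n \in \omega$ player I chooses $\mathcal{S}_n \in \pi\mathcal{N}_x$, then player II chooses $S_n \in \mathcal{S}_n$; II wins iff $\{S_n : n \in \omega\} \in \pi\mathcal{N}_x$. $X$ is supertight at $x$ if for every $\pi$-network $\mathcal{P}$ at $x$ consisting of countable sets there is a countable subfamily $\mathcal{Q} \subset \mathcal{P}$ which is still a $\pi$-network at $x$. *)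

theory Defs
  imports "HOL-Analysis.Analysis"
begin

text \<open>A family S of nonempty subsets of X is a pi-network at x if every
neighbourhood of x contains an element of S.  Neighbourhoods are represented by
open sets containing x (equivalent for this purpose).\<close>
definition pi_network :: "'a topology \<Rightarrow> 'a \<Rightarrow> 'a set set \<Rightarrow> bool" where
  "pi_network X x S \<longleftrightarrow>
     (\<forall>A\<in>S. A \<noteq> {} \<and> A \<subseteq> topspace X) \<and>
     (\<forall>U. openin X U \<and> x \<in> U \<longrightarrow> (\<exists>A\<in>S. A \<subseteq> U))"

definition piN :: "'a topology \<Rightarrow> 'a \<Rightarrow> 'a set set set" where
  "piN X x = {S. pi_network X x S \<and> (\<forall>A\<in>S. finite A)}"

text \<open>Player II has a winning strategy in G_1(A, B): a strategy maps the
(nonempty) list of I's moves so far to a choice in the last move; it is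
winning if for every play of I the choices are legal and the set of choices lies in B.\<close>
definition II_wins_G1 :: "'c set set \<Rightarrow> 'c set set \<Rightarrow> bool" where
  "II_wins_G1 \<A> \<B> \<longleftrightarrow>
     (\<exists>\<sigma> :: 'c set list \<Rightarrow> 'c.
        \<forall>f :: nat \<Rightarrow> 'c set. (\<forall>n. f n \<in> \<A>) \<longrightarrow>
          (\<forall>n. \<sigma> (map f [0..<Suc n]) \<in> f n) \<and>
          range (\<lambda>n. \<sigma> (map f [0..<Suc n])) \<in> \<B>)"

definition tychonoff_space :: "'a topology \<Rightarrow> bool" where
  "tychonoff_space X \<longleftrightarrow> t1_space X \<and> completely_regular_space X"

definition supertight_at :: "'a topology \<Rightarrow> 'a \<Rightarrow> bool" where
  "supertight_at X x \<longleftrightarrow>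
     (\<forall>P. pi_network X x P \<and> (\<forall>A\<in>P. countable A) \<longrightarrow>
        (\<exists>Q\<subseteq>P. countable Q \<and> pi_network X x Q))"

end

theory Submission
  imports Defs
begin

text \<open>For any finite position s, the singletons {y}
that are not II's answer to any move after s cannot form a \<pi>-network at x, so some
neighbourhood W of x consists of points y with {y} an answer after s.  Given a \<pi>-network P
of countable sets, pick for each position a member of P inside such a W; for each point of it
fix a move of I that II answers with that singleton.  Starting from the empty position this
spans a countably branching tree of positions, and the members of P attached to its nodes form
a countable subfamily Q.  If some neighbourhood U of x contained no member of Q, following in
every node a point outside U would give a play in which every answer of II misses U, so II
would lose.\<close>

definition G1_winning :: "('c set list \<Rightarrow> 'c) \<Rightarrow> 'c set set \<Rightarrow> 'c set set \<Rightarrow> bool" where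
  "G1_winning \<sigma> \<A> \<B> \<longleftrightarrow>
     (\<forall>f :: nat \<Rightarrow> 'c set. (\<forall>n. f n \<in> \<A>) \<longrightarrow>
        (\<forall>n. \<sigma> (map f [0..<Suc n]) \<in> f n) \<and> range (\<lambda>n. \<sigma> (map f [0..<Suc n])) \<in> \<B>)"

lemma II_wins_G1_iff: "II_wins_G1 \<A> \<B> \<longleftrightarrow> (\<exists>\<sigma>. G1_winning \<sigma> \<A> \<B>)"
  unfolding II_wins_G1_def G1_winning_def ..

lemma G1_winning_legal:
  assumes win: "G1_winning \<sigma> \<A> \<B>" and s: "set s \<subseteq> \<A>" and S: "S \<in> \<A>"
  shows "\<sigma> (s @ [S]) \<in> S"
proof -
  define f where "f n = (if n < length s then s ! n else S)" for n
  have f_moves: "\<forall>n. f n \<in> \<A>" using s S by (auto simp: f_def)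
  have "map f [0..<Suc (length s)] = s @ [S]"
    by (rule nth_equalityI) (auto simp: f_def nth_append)
  moreover have "f (length s) = S" by (simp add: f_def)
  ultimately show ?thesis using win f_moves unfolding G1_winning_def by metis
qed

lemma G1_winning_singleton_answers_nhd:
  assumes win: "G1_winning \<sigma> (piN X x) \<B>" and s: "set s \<subseteq> piN X x"
  obtains W where "openin X W" "x \<in> W" "\<forall>y\<in>W. \<exists>S\<in>piN X x. \<sigma> (s @ [S]) = {y}"
proof -
  define C where "C = {{y} | y. y \<in> topspace X \<and> (\<forall>S\<in>piN X x. \<sigma> (s @ [S]) \<noteq> {y})}"
  have not_pi: "\<not> pi_network X x C"
  proof
    assume "pi_network X x C"
    then have "C \<in> piN X x" by (auto simp: piN_def C_def)
    with G1_winning_legal[OF win s] have "\<sigma> (s @ [C]) \<in> C" .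
    with \<open>C \<in> piN X x\<close> show False by (auto simp: C_def)
  qed
  have "\<forall>A\<in>C. A \<noteq> {} \<and> A \<subseteq> topspace X" by (auto simp: C_def)
  with not_pi obtain U where U: "openin X U" "x \<in> U" "\<forall>G\<in>C. \<not> G \<subseteq> U"
    unfolding pi_network_def by blast
  have "\<exists>S\<in>piN X x. \<sigma> (s @ [S]) = {y}" if "y \<in> U" for y
  proof -
    from U(1) \<open>y \<in> U\<close> have "y \<in> topspace X" by (meson openin_subset subsetD)
    with \<open>y \<in> U\<close> U(3) show ?thesis unfolding C_def by blast
  qed
  with U show ?thesis using that by blast
qed

primrec tree_level :: "('l list \<Rightarrow> 'y set) \<Rightarrow> ('l list \<Rightarrow> 'y \<Rightarrow> 'l) \<Rightarrow> nat \<Rightarrow> 'l list set" where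
  "tree_level A M 0 = {[]}"
| "tree_level A M (Suc n) = (\<Union>s\<in>tree_level A M n. (\<lambda>y. s @ [M s y]) ` A s)"

primrec tree_branch :: "('l list \<Rightarrow> 'y \<Rightarrow> 'l) \<Rightarrow> ('l list \<Rightarrow> 'y) \<Rightarrow> nat \<Rightarrow> 'l list" where
  "tree_branch M c 0 = []"
| "tree_branch M c (Suc n) = tree_branch M c n @ [M (tree_branch M c n) (c (tree_branch M c n))]"

lemma countable_tree_level:
  assumes "\<And>n s. s \<in> tree_level A M n \<Longrightarrow> countable (A s)"
  shows "countable (tree_level A M n)"
  by (induction n) (auto simp: assms)

lemma tree_level_subset_lists:
  assumes "\<And>s y. set s \<subseteq> L \<Longrightarrow> y \<in> A s \<Longrightarrow> M s y \<in> L"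
  shows "s \<in> tree_level A M n \<Longrightarrow> set s \<subseteq> L"
  by (induction n arbitrary: s) (auto simp: assms subset_iff)

lemma tree_branch_eq_map:
  "tree_branch M c n = map (\<lambda>k. M (tree_branch M c k) (c (tree_branch M c k))) [0..<n]"
  by (induction n) simp_all

lemma tree_branch_in_level:
  assumes "\<And>n s. s \<in> tree_level A M n \<Longrightarrow> c s \<in> A s"
  shows "tree_branch M c n \<in> tree_level A M n"
  by (induction n) (auto intro!: imageI assms)

lemma pi_network_strategy_tree:
  assumes win: "G1_winning \<sigma> (piN X x) (piN X x)"
    and P: "pi_network X x P" and A: "A ` (\<Union>n. tree_level A M n) \<subseteq> P"
    and M: "\<And>s y. set s \<subseteq> piN X x \<Longrightarrow> y \<in> A s \<Longrightarrow> M s y \<in> piN X x \<and> \<sigma> (s @ [M s y]) = {y}"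
  shows "pi_network X x (A ` (\<Union>n. tree_level A M n))"
  unfolding pi_network_def
proof (intro conjI allI impI)
  show "\<forall>B\<in>A ` (\<Union>n. tree_level A M n). B \<noteq> {} \<and> B \<subseteq> topspace X"
    using P subsetD[OF A] unfolding pi_network_def by meson
  have legal: "set s \<subseteq> piN X x" if "s \<in> tree_level A M n" for s n
    using tree_level_subset_lists[OF conjunct1[OF M] that] .
  fix U assume U: "openin X U \<and> x \<in> U"
  show "\<exists>B\<in>A ` (\<Union>n. tree_level A M n). B \<subseteq> U"
  proof (rule ccontr)
    assume "\<not> ?thesis"
    then have "\<exists>y. y \<in> A s \<and> y \<notin> U" if "s \<in> tree_level A M n" for s n
      using that by blast
    then obtain c where c: "\<And>n s. s \<in> tree_level A M n \<Longrightarrow> c s \<in> A s \<and> c s \<notin> U"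
      by metis
    define p where "p = tree_branch M c"
    define f where "f n = M (p n) (c (p n))" for n
    have p_level: "p n \<in> tree_level A M n" for n
      unfolding p_def using c by (intro tree_branch_in_level) blast
    have move: "f n \<in> piN X x" and answer: "\<sigma> (p n @ [f n]) = {c (p n)}" for n
      using M[OF legal[OF p_level] conjunct1[OF c[OF p_level]]] by (simp_all add: f_def)
    have play: "map f [0..<Suc n] = p n @ [f n]" for n
      using tree_branch_eq_map[of M c n] by (simp add: p_def f_def)
    have "range (\<lambda>n. \<sigma> (map f [0..<Suc n])) \<in> piN X x"
      using win move unfolding G1_winning_def by blast
    then obtain n where "\<sigma> (map f [0..<Suc n]) \<subseteq> U"
      using U unfolding piN_def pi_network_def by blast
    then show False using answer play c[OF p_level] by simp
  qed
qed

lemma supertight_if_II_wins_G1: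
  assumes "II_wins_G1 (piN X x) (piN X x)"
  shows "supertight_at X x"
  unfolding supertight_at_def
proof (intro allI impI, elim conjE)
  obtain \<sigma> where win: "G1_winning \<sigma> (piN X x) (piN X x)"
    using assms by (auto simp: II_wins_G1_iff)
  fix P assume P: "pi_network X x P" and countable_members: "\<forall>B\<in>P. countable B"
  have good_member: "\<exists>B. B \<in> P \<and> (\<forall>y\<in>B. \<exists>S\<in>piN X x. \<sigma> (s @ [S]) = {y})"
    if legal: "set s \<subseteq> piN X x" for s
  proof -
    obtain W where W: "openin X W" "x \<in> W" "\<forall>y\<in>W. \<exists>S\<in>piN X x. \<sigma> (s @ [S]) = {y}"
      using G1_winning_singleton_answers_nhd[OF win legal] .
    moreover obtain B where "B \<in> P" "B \<subseteq> W"
      using P W(1,2) unfolding pi_network_def by blast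
    ultimately show ?thesis by blast
  qed
  define A where "A s = (SOME B. B \<in> P \<and> (\<forall>y\<in>B. \<exists>S\<in>piN X x. \<sigma> (s @ [S]) = {y}))" for s
  have A: "A s \<in> P" and answers: "\<forall>y\<in>A s. \<exists>S\<in>piN X x. \<sigma> (s @ [S]) = {y}"
    if "set s \<subseteq> piN X x" for s
    using someI_ex[OF good_member[OF that]] unfolding A_def by blast+
  define M where "M s y = (SOME S. S \<in> piN X x \<and> \<sigma> (s @ [S]) = {y})" for s y
  have M: "M s y \<in> piN X x \<and> \<sigma> (s @ [M s y]) = {y}" if "set s \<subseteq> piN X x" "y \<in> A s" for s y
    unfolding M_def by (rule someI_ex) (use answers[OF that(1)] that(2) in blast)
  have legal: "set s \<subseteq> piN X x" if "s \<in> tree_level A M n" for s n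
    using tree_level_subset_lists[OF conjunct1[OF M] that] .
  define Q where "Q = A ` (\<Union>n. tree_level A M n)"
  have "Q \<subseteq> P"
    unfolding Q_def using A legal by blast
  moreover have "countable Q"
    unfolding Q_def using A countable_members legal
    by (intro countable_image countable_UN countable_tree_level) blast+
  moreover have "pi_network X x Q"
    using win P \<open>Q \<subseteq> P\<close> M unfolding Q_def by (rule pi_network_strategy_tree)
  ultimately show "\<exists>Q\<subseteq>P. countable Q \<and> pi_network X x Q" by blast
qed

theorem theorem4p8:
  fixes X :: "'a topology" and x :: 'a
  assumes "tychonoff_space X"
    and "x \<in> topspace X"
    and "II_wins_G1 (piN X x) (piN X x)"
  shows "supertight_at X x"
  using assms(3) by (rule supertight_if_II_wins_G1)

end
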